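(* Let $*$ be $\mathsf{BCI}$. Let $b$ be a belief state and $\alpha,\beta\in L$ such that $b\diamond\alpha$ is a belief state, $b\lhd\alpha$ is a belief state, $b(\beta)=1$, and $\alpha$ is $\beta$-trustworthy. Then $(b\lhd\alpha)(\beta)=1$.
   Context: $W$ is the finite set of worlds of a finite propositional language $L$; $\|\alpha\|$ the $\alpha$-worlds. A belief state is a probability distribution $b$ on $W$; $b(\beta)=\sum_{w\models\beta}b(w)$. A model is $M=\langle W,\varepsilon,T,E,O,\mathit{os}\rangle$ with events $\varepsilon$, $T:W\times\varepsilon\times W\to[0,1]$ with $\sum_{w'}T(w,e,w')=1$, event likelihood $E(e,w)\in[0,1]$, observation function $O:L\times W\to[0,1]$, ontic strength $\mathit{os}:L\times W\to[0,1]$. Update: $(b\diamond\alpha)(w')=\frac1\gamma O(\alpha,w')\sum_w\sum_e T(w,e,w')E(e,w)b(w)$, defined iff $\gamma>0$. Revision $\mathsf{BCI}$: with $d$ a distance on worlds ($d(w,w)<d(v,w)$ for $v\neq w$), $\mathit{Min}(\alpha,w,d)$ the set of $d$-closest $\alpha$-worlds to $w$, $(b\,\mathsf{GI}\,\alpha)(w)=0$ if $w\notin\|\alpha\|$, else $\sum_{w':w\in\mathit{Min}(\alpha,w',d)}b(w')/|\mathit{Min}(\alpha,w',d)|$; $(b\,\mathsf{OGI}\,\alpha)(w)=\frac{O(\alpha,w)(b\,\mathsf{GI}\,\alpha)(w)}{\sum_{w'}O(\alpha,w')(b\,\mathsf{GI}\,\alpha)(w')}$; $b\,\mathsf{BCI}\,\alpha$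 is Bayesian conditioning ($b(w)/b(\alpha)$ on $\alpha$-worlds, $0$ elsewhere) if $b(\alpha)>0$ and $b\,\mathsf{OGI}\,\alpha$ if $b(\alpha)=0$. Hybrid change: $(b\lhd\alpha)(w)=\frac1\gamma[(1-\mathit{os}(\alpha,w))(b\,\mathsf{BCI}\,\alpha)(w)+\mathit{os}(\alpha,w)(b\diamond\alpha)(w)]$ with $\gamma$ the normalizing sum; $b\lhd\alpha$ is a belief state iff both components are defined and $\gamma>0$. $\alpha$ is $\beta$-trustworthy iff $O(\alpha,w)=0$ for every $w\not\models\beta$. *)

theory Defs
  imports Complex_Main
begin

datatype 'a form = Atom 'a | Top | Bot | Neg "'a form" | Conj "'a form" "'a form"
  | Disj "'a form" "'a form" | Impl "'a form" "'a form"

type_synonym 'a world = "'a \<Rightarrow> bool"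

fun sat :: "'a world \<Rightarrow> 'a form \<Rightarrow> bool" where
  "sat w (Atom p) = w p"
| "sat w Top = True"
| "sat w Bot = False"
| "sat w (Neg f) = (\<not> sat w f)"
| "sat w (Conj f g) = (sat w f \<and> sat w g)"
| "sat w (Disj f g) = (sat w f \<or> sat w g)"
| "sat w (Impl f g) = (sat w f \<longrightarrow> sat w g)"

definition mods :: "'a form \<Rightarrow> 'a world set" where
  "mods f = {w. sat w f}"

definition prob :: "('a world \<Rightarrow> real) \<Rightarrow> 'a form \<Rightarrow> real" where
  "prob b f = (\<Sum>w\<in>mods f. b w)"

definition is_belief :: "('a::finite world \<Rightarrow> real) \<Rightarrow> bool" where
  "is_belief b \<longleftrightarrow> (\<forall>w. 0 \<le> b w) \<and> (\<Sum>w\<in>UNIV. b w) = 1"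

text \<open>Model: transitions T, event likelihood E, observation O, ontic strength os; events of finite type 'e.\<close>
definition is_model ::
  "('a::finite world \<Rightarrow> 'e::finite \<Rightarrow> 'a world \<Rightarrow> real) \<Rightarrow> ('e \<Rightarrow> 'a world \<Rightarrow> real)
   \<Rightarrow> ('a form \<Rightarrow> 'a world \<Rightarrow> real) \<Rightarrow> ('a form \<Rightarrow> 'a world \<Rightarrow> real) \<Rightarrow> bool" where
  "is_model T E Obs os \<longleftrightarrow>
     (\<forall>w e w'. 0 \<le> T w e w' \<and> T w e w' \<le> 1) \<and>
     (\<forall>w e. (\<Sum>w'\<in>UNIV. T w e w') = 1) \<and>
     (\<forall>e w. 0 \<le> E e w \<and> E e w \<le> 1) \<and>
     (\<forall>f w. 0 \<le> Obs f w \<and> Obs f w \<le> 1) \<and>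
     (\<forall>f w. 0 \<le> os f w \<and> os f w \<le> 1)"

definition is_distance :: "('a world \<Rightarrow> 'a world \<Rightarrow> real) \<Rightarrow> bool" where
  "is_distance d \<longleftrightarrow> (\<forall>w v. v \<noteq> w \<longrightarrow> d w w < d v w)"

definition upd_raw where
  "upd_raw T E Obs b \<alpha> w' =
     Obs \<alpha> w' * (\<Sum>w\<in>UNIV. \<Sum>e\<in>UNIV. T w e w' * E e w * b w)"

definition upd_gamma where
  "upd_gamma T E Obs b \<alpha> = (\<Sum>w'\<in>UNIV. upd_raw T E Obs b \<alpha> w')"

definition upd_defined where
  "upd_defined T E Obs b \<alpha> \<longleftrightarrow> upd_gamma T E Obs b \<alpha> > 0"

definition upd where
  "upd T E Obs b \<alpha> w' = upd_raw T E Obs b \<alpha> w' / upd_gamma T E Obs b \<alpha>"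

definition MinW :: "('a world \<Rightarrow> 'a world \<Rightarrow> real) \<Rightarrow> 'a form \<Rightarrow> 'a world \<Rightarrow> 'a world set" where
  "MinW d \<alpha> w = {v. sat v \<alpha> \<and> (\<forall>u. sat u \<alpha> \<longrightarrow> d v w \<le> d u w)}"

definition GI :: "('a::finite world \<Rightarrow> 'a world \<Rightarrow> real) \<Rightarrow> ('a world \<Rightarrow> real) \<Rightarrow> 'a form \<Rightarrow> 'a world \<Rightarrow> real" where
  "GI d b \<alpha> w = (if \<not> sat w \<alpha> then 0
     else (\<Sum>w'\<in>{w'. w \<in> MinW d \<alpha> w'}. b w' / real (card (MinW d \<alpha> w'))))"

definition OGI_den where
  "OGI_den Obs d b \<alpha> = (\<Sum>w'\<in>UNIV. Obs \<alpha> w' * GI d b \<alpha> w')"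

definition OGI where
  "OGI Obs d b \<alpha> w = Obs \<alpha> w * GI d b \<alpha> w / OGI_den Obs d b \<alpha>"

definition BCI where
  "BCI Obs d b \<alpha> w = (if prob b \<alpha> > 0
      then (if sat w \<alpha> then b w / prob b \<alpha> else 0)
      else OGI Obs d b \<alpha> w)"

definition BCI_defined where
  "BCI_defined Obs d b \<alpha> \<longleftrightarrow> prob b \<alpha> > 0 \<or> OGI_den Obs d b \<alpha> > 0"

definition hyb_raw where
  "hyb_raw T E Obs os d b \<alpha> w =
     (1 - os \<alpha> w) * BCI Obs d b \<alpha> w + os \<alpha> w * upd T E Obs b \<alpha> w"

definition hyb_gamma where
  "hyb_gamma T E Obs os d b \<alpha> = (\<Sum>w\<in>UNIV. hyb_raw T E Obs os d b \<alpha> w)"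

definition hyb where
  "hyb T E Obs os d b \<alpha> w = hyb_raw T E Obs os d b \<alpha> w / hyb_gamma T E Obs os d b \<alpha>"

definition hyb_is_belief where
  "hyb_is_belief T E Obs os d b \<alpha> \<longleftrightarrow>
     BCI_defined Obs d b \<alpha> \<and> upd_defined T E Obs b \<alpha> \<and> hyb_gamma T E Obs os d b \<alpha> > 0"

definition trustworthy :: "('a form \<Rightarrow> 'a world \<Rightarrow> real) \<Rightarrow> 'a form \<Rightarrow> 'a form \<Rightarrow> bool" where
  "trustworthy Obs \<alpha> \<beta> \<longleftrightarrow> (\<forall>w. \<not> sat w \<beta> \<longrightarrow> Obs \<alpha> w = 0)"

end

theory Submission
  imports Defs
begin

text \<open>Outside \<open>\<beta>\<close> the prior \<open>b\<close> vanishes (as \<open>b(\<beta>) = 1\<close>) and so does the observation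
  likelihood of \<open>\<alpha>\<close> (by trustworthiness). Hence both components of the hybrid change vanish
  there: Bayesian conditioning and the update are proportional to \<open>b\<close> resp. \<open>O(\<alpha>,\<cdot>)\<close>, and
  \<open>OGI\<close> carries the factor \<open>O(\<alpha>,\<cdot>)\<close>. A normalised state vanishing outside \<open>\<beta>\<close> gives \<open>\<beta>\<close>
  probability one.\<close>

lemma prob_eq_sum_UNIV_if_vanishes:
  fixes b :: "'a::finite world \<Rightarrow> real"
  assumes "\<And>w. \<not> sat w f \<Longrightarrow> b w = 0"
  shows "prob b f = (\<Sum>w\<in>UNIV. b w)"
  unfolding prob_def using assms by (intro sum.mono_neutral_left) (auto simp: mods_def)

lemma belief_vanishes_outside:
  assumes "is_belief b" and "prob b f = 1" and "\<not> sat w f"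
  shows "b w = 0"
proof -
  have "(\<Sum>v\<in>UNIV - mods f. b v) = 0"
    using assms(1,2) by (simp add: is_belief_def prob_def sum_diff)
  then show ?thesis
    using assms(1,3) by (simp add: is_belief_def sum_nonneg_eq_0_iff mods_def)
qed

lemma hyb_raw_eq_0:
  assumes "b w = 0" and "Obs \<alpha> w = 0"
  shows "hyb_raw T E Obs os d b \<alpha> w = 0"
  using assms by (simp add: hyb_raw_def BCI_def OGI_def upd_def upd_raw_def)

lemma sum_hyb:
  assumes "hyb_is_belief T E Obs os d b \<alpha>"
  shows "(\<Sum>w\<in>UNIV. hyb T E Obs os d b \<alpha> w) = 1"
  using assms by (simp add: hyb_def hyb_gamma_def hyb_is_belief_def sum_divide_distrib[symmetric])

theorem mainTheorem20:
  fixes T :: "'a::finite world \<Rightarrow> 'e::finite \<Rightarrow> 'a world \<Rightarrow> real"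
    and E :: "'e \<Rightarrow> 'a world \<Rightarrow> real"
    and Obs os :: "'a form \<Rightarrow> 'a world \<Rightarrow> real"
    and d :: "'a world \<Rightarrow> 'a world \<Rightarrow> real"
    and b :: "'a world \<Rightarrow> real"
    and \<alpha> \<beta> :: "'a form"
  assumes "is_model T E Obs os"
    and "is_distance d"
    and "is_belief b"
    and "upd_defined T E Obs b \<alpha>"
    and "hyb_is_belief T E Obs os d b \<alpha>"
    and "prob b \<beta> = 1"
    and "trustworthy Obs \<alpha> \<beta>"
  shows "prob (hyb T E Obs os d b \<alpha>) \<beta> = 1"
proof -
  have "hyb T E Obs os d b \<alpha> w = 0" if "\<not> sat w \<beta>" for w
  proof -
    have "b w = 0" using belief_vanishes_outside assms(3,6) that .
    moreover have "Obs \<alpha> w = 0" using assms(7) that by (simp add: trustworthy_def)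
    ultimately show ?thesis by (simp add: hyb_def hyb_raw_eq_0)
  qed
  then have "prob (hyb T E Obs os d b \<alpha>) \<beta> = (\<Sum>w\<in>UNIV. hyb T E Obs os d b \<alpha> w)"
    by (rule prob_eq_sum_UNIV_if_vanishes)
  also have "\<dots> = 1" using sum_hyb assms(5) .
  finally show ?thesis .
qed

end
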